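(* Let $p=p(n)\in[0,1]$ satisfy $p n/(\log_2 n)^2\to\infty$ as $n\to\infty$. Then asymptotically almost surely (i.e. with probability tending to $1$ as $n\to\infty$), $$\chi'_{\rm ccf}(\mathbb{G}_{n,p})\ge\log_2(pn)-2\log_2\log_2 n\quad\text{and}\quad\chi'_{\rm ocf}(\mathbb{G}_{n,p})\ge\log_2(pn)-2\log_2\log_2 n.$$
   Context: $\mathbb{G}_{n,p}$ is the binomial random graph on vertex set $[n]$ in which each pair of vertices is joined independently with probability $p$. For an edge $e=uv$ of a graph $G=(V,E)$, $E[e]$ is the set of edges incident with $u$ or $v$ and $E(e)=E[e]\setminus\{e\}$. An edge colouring is closed conflict-free if for every edge $e$ some colour is assigned to exactly one edge of $E[e]$, and open conflict-free if for every edge $e$ with $E(e)\ne\emptyset$ some colour is assigned to exactly one edge of $E(e)$. $\chi'_{\rm ccf}(G)$ and $\chi'_{\rm ocf}(G)$ denote the minimum numbers of colours in such colourings, respectively. *)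

theory Defs
  imports Complex_Main
begin

text \<open>Simple graphs on vertex set [n] = {1..n}: a graph is a set of edges, each edge
  a two-element set of vertices.\<close>

definition all_edges :: "nat \<Rightarrow> nat set set" where
  "all_edges n = {e. \<exists>u v. u \<in> {1..n} \<and> v \<in> {1..n} \<and> u \<noteq> v \<and> e = {u, v}}"

text \<open>Probability that the binomial random graph G(n,p) satisfies property P.\<close>

definition gnp_prob :: "nat \<Rightarrow> real \<Rightarrow> (nat set set \<Rightarrow> bool) \<Rightarrow> real" where
  "gnp_prob n p P =
     (\<Sum>E\<in>Pow (all_edges n).
        if P E then p ^ card E * (1 - p) ^ (card (all_edges n) - card E) else 0)"

text \<open>E[e]: edges incident with an endpoint of e (including e); E(e) = E[e] minus e.\<close>

definition closed_nbhd :: "nat set set \<Rightarrow> nat set \<Rightarrow> nat set set" where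
  "closed_nbhd E e = {f \<in> E. f \<inter> e \<noteq> {}}"

definition open_nbhd :: "nat set set \<Rightarrow> nat set \<Rightarrow> nat set set" where
  "open_nbhd E e = closed_nbhd E e - {e}"

definition closed_cf_colouring :: "nat set set \<Rightarrow> nat \<Rightarrow> (nat set \<Rightarrow> nat) \<Rightarrow> bool" where
  "closed_cf_colouring E k c \<longleftrightarrow>
     (\<forall>e\<in>E. c e < k) \<and>
     (\<forall>e\<in>E. \<exists>col. card {f \<in> closed_nbhd E e. c f = col} = 1)"

definition open_cf_colouring :: "nat set set \<Rightarrow> nat \<Rightarrow> (nat set \<Rightarrow> nat) \<Rightarrow> bool" where
  "open_cf_colouring E k c \<longleftrightarrow>
     (\<forall>e\<in>E. c e < k) \<and>
     (\<forall>e\<in>E. open_nbhd E e \<noteq> {} \<longrightarrow> (\<exists>col. card {f \<in> open_nbhd E e. c f = col} = 1))"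

definition chi_ccf :: "nat set set \<Rightarrow> nat" where
  "chi_ccf E = (LEAST k. \<exists>c. closed_cf_colouring E k c)"

definition chi_ocf :: "nat set set \<Rightarrow> nat" where
  "chi_ocf E = (LEAST k. \<exists>c. open_cf_colouring E k c)"

end

theory Submission
  imports Defs "HOL-Real_Asymp.Real_Asymp"
begin

text \<open>Group the vertices of a graph carrying a closed or open conflict-free edge colouring
  with $k$ colours by the set of colours they see; some class $A$ has at least $n/2^k$
  vertices. For an edge inside $A$ both endpoints see the same colours, and the conflict-free
  condition then forces the edge to be the only one of its colour at one of its endpoints $w$.
  As $e \mapsto (w, c(e))$ is injective, $A$ spans at most $k|A|$ edges.

  In $\mathbb{G}_{n,p}$ let $L = \log_2 n$ and $t = \log_2(pn) - 2\log_2 L$, so that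
  $n/2^t = L^2/p$. An exponential Markov bound gives
  $P(e(A) \le t|A|) \le 2^{t|A|}(1-p/2)^{\binom{|A|}{2}}$, and summing over all sets of at least
  $L^2/p$ vertices shows that some such set is this sparse with probability at most
  $\exp(e^{1/4} n^2 e^{-L^2/4}) - 1 \to 0$.\<close>

lemma finite_all_edges: "finite (all_edges n)"
proof -
  have "all_edges n \<subseteq> Pow {1..n}"
    unfolding all_edges_def by auto
  then show ?thesis
    by (rule finite_subset) simp
qed

lemma all_edgesE:
  assumes "e \<in> all_edges n"
  obtains u v where "e = {u, v}" "u \<noteq> v" "u \<in> {1..n}" "v \<in> {1..n}"
  using assms unfolding all_edges_def by blast

lemma all_edges_eqI:
  assumes "g \<in> all_edges n" "u \<in> g" "v \<in> g" "u \<noteq> v"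
  shows "g = {u, v}"
  using assms unfolding all_edges_def by blast

definition edges_within :: "nat \<Rightarrow> nat set \<Rightarrow> nat set set" where
  "edges_within n A = {e \<in> all_edges n. e \<subseteq> A}"

definition palette :: "nat set set \<Rightarrow> (nat set \<Rightarrow> nat) \<Rightarrow> nat \<Rightarrow> nat set" where
  "palette E c v = c ` {f \<in> E. v \<in> f}"

definition unique_colour_at :: "nat set set \<Rightarrow> (nat set \<Rightarrow> nat) \<Rightarrow> nat \<Rightarrow> nat set \<Rightarrow> bool" where
  "unique_colour_at E c w e \<longleftrightarrow> (\<forall>f\<in>E. w \<in> f \<and> c f = c e \<longrightarrow> f = e)"

lemma open_nbhd_colour_repeated:
  assumes E: "E \<subseteq> all_edges n" and e: "e \<in> E"
    and same_palette: "\<forall>x\<in>e. \<forall>y\<in>e. palette E c x = palette E c y"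
    and not_unique: "\<forall>w\<in>e. \<not> unique_colour_at E c w e"
    and g: "g \<in> open_nbhd E e"
  shows "\<exists>g'\<in>open_nbhd E e. g' \<noteq> g \<and> c g' = c g"
proof -
  obtain u v where uv: "e = {u, v}" "u \<noteq> v"
    using E e by (blast elim: all_edgesE)
  have g_edge: "g \<in> E" "g \<noteq> e" "g \<inter> e \<noteq> {}"
    using g unfolding open_nbhd_def closed_nbhd_def by auto
  have in_open: "f \<in> open_nbhd E e" if "f \<in> E" "f \<noteq> e" "x \<in> f" "x \<in> e" for f x
    using that unfolding open_nbhd_def closed_nbhd_def by auto
  show ?thesis
  proof (cases "c g = c e")
    case True
    obtain fu where fu: "fu \<in> E" "u \<in> fu" "c fu = c e" "fu \<noteq> e"
      using not_unique uv unfolding unique_colour_at_def by auto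
    obtain fv where fv: "fv \<in> E" "v \<in> fv" "c fv = c e" "fv \<noteq> e"
      using not_unique uv unfolding unique_colour_at_def by auto
    have "fu \<noteq> fv"
      using all_edges_eqI[of fu n u v] fu fv uv E by auto
    moreover have "fu \<in> open_nbhd E e" "fv \<in> open_nbhd E e"
      using in_open fu fv uv by auto
    ultimately show ?thesis
      using fu(3) fv(3) True by (cases "g = fu") auto
  next
    case False
    obtain w w' where w: "w \<in> g" "w \<in> e" "w' \<in> e" "w' \<noteq> w"
      using g_edge uv by auto
    have "c g \<in> palette E c w'"
      using same_palette w g_edge unfolding palette_def by blast
    then obtain g' where g': "g' \<in> E" "w' \<in> g'" "c g' = c g"
      unfolding palette_def by auto
    have "g' \<noteq> g"
    proof
      assume "g' = g"
      then have "g = {w, w'}" and "e = {w, w'}"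
        using all_edges_eqI g' w g_edge e E by blast+
      then show False
        using g_edge by simp
    qed
    moreover have "g' \<noteq> e"
      using False g' by auto
    ultimately show ?thesis
      using in_open[OF g'(1) _ g'(2) w(3)] g'(3) by blast
  qed
qed

lemma closed_cf_colouring_unique_colour_at:
  assumes E: "E \<subseteq> all_edges n" and cf: "closed_cf_colouring E k c" and e: "e \<in> E"
    and same_palette: "\<forall>x\<in>e. \<forall>y\<in>e. palette E c x = palette E c y"
  shows "\<exists>w\<in>e. unique_colour_at E c w e"
proof (rule ccontr)
  assume not_unique: "\<not> ?thesis"
  obtain col where "card {f \<in> closed_nbhd E e. c f = col} = 1"
    using cf e unfolding closed_cf_colouring_def by blast
  then obtain g where g: "{f \<in> closed_nbhd E e. c f = col} = {g}"
    by (rule card_1_singletonE)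
  then have g_col: "c g = col"
    by blast
  have g_only: "f = g" if "f \<in> closed_nbhd E e" "c f = col" for f
    using g that by blast
  show False
  proof (cases "g = e")
    case True
    obtain w where "w \<in> e"
      using E e by (blast elim: all_edgesE)
    then obtain f where f: "f \<in> E" "w \<in> f" "c f = c e" "f \<noteq> e"
      using not_unique unfolding unique_colour_at_def by blast
    then have "f \<in> closed_nbhd E e"
      using \<open>w \<in> e\<close> unfolding closed_nbhd_def by blast
    then show False
      using g_only f True g_col by blast
  next
    case False
    then have "g \<in> open_nbhd E e"
      using g unfolding open_nbhd_def by blast
    then obtain g' where "g' \<in> open_nbhd E e" "g' \<noteq> g" "c g' = c g"
      using open_nbhd_colour_repeated[OF E e same_palette] not_unique by blast
    then show False
      using g_only g_col unfolding open_nbhd_def by blast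
  qed
qed

lemma open_cf_colouring_unique_colour_at:
  assumes E: "E \<subseteq> all_edges n" and cf: "open_cf_colouring E k c" and e: "e \<in> E"
    and same_palette: "\<forall>x\<in>e. \<forall>y\<in>e. palette E c x = palette E c y"
  shows "\<exists>w\<in>e. unique_colour_at E c w e"
proof (rule ccontr)
  assume not_unique: "\<not> ?thesis"
  obtain w where "w \<in> e"
    using E e by (blast elim: all_edgesE)
  then obtain f where "f \<in> E" "w \<in> f" "f \<noteq> e"
    using not_unique unfolding unique_colour_at_def by blast
  then have "open_nbhd E e \<noteq> {}"
    using \<open>w \<in> e\<close> unfolding open_nbhd_def closed_nbhd_def by blast
  then obtain col where "card {f \<in> open_nbhd E e. c f = col} = 1"
    using cf e unfolding open_cf_colouring_def by blast
  then obtain g where g: "{f \<in> open_nbhd E e. c f = col} = {g}"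
    by (rule card_1_singletonE)
  then have "g \<in> open_nbhd E e" "c g = col"
    by blast+
  then obtain g' where "g' \<in> open_nbhd E e" "g' \<noteq> g" "c g' = col"
    using open_nbhd_colour_repeated[OF E e same_palette] not_unique by metis
  then show False
    using g by blast
qed

lemma card_edges_inside_le:
  assumes A: "finite A" and colours: "\<forall>e\<in>E. c e < k"
    and unique: "\<forall>e\<in>E. e \<subseteq> A \<longrightarrow> (\<exists>w\<in>e. unique_colour_at E c w e)"
  shows "card {e\<in>E. e \<subseteq> A} \<le> k * card A"
proof -
  have "\<forall>e\<in>{e\<in>E. e \<subseteq> A}. \<exists>w. w \<in> e \<and> unique_colour_at E c w e"
    using unique by blast
  from bchoice[OF this] obtain w
    where w: "\<forall>e\<in>{e\<in>E. e \<subseteq> A}. w e \<in> e \<and> unique_colour_at E c (w e) e"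
    by blast
  have "inj_on (\<lambda>e. (w e, c e)) {e\<in>E. e \<subseteq> A}"
  proof (rule inj_onI)
    fix x y assume x: "x \<in> {e\<in>E. e \<subseteq> A}" and y: "y \<in> {e\<in>E. e \<subseteq> A}"
      and eq: "(w x, c x) = (w y, c y)"
    have "unique_colour_at E c (w x) x"
      using w x by blast
    moreover have "y \<in> E" "w x \<in> y" "c y = c x"
      using w y eq by auto
    ultimately show "x = y"
      unfolding unique_colour_at_def by blast
  qed
  moreover have "(\<lambda>e. (w e, c e)) ` {e\<in>E. e \<subseteq> A} \<subseteq> A \<times> {..<k}"
    using w colours by auto
  ultimately have "card {e\<in>E. e \<subseteq> A} \<le> card (A \<times> {..<k})"
    by (rule card_inj_on_le) (simp add: A)
  then show ?thesis
    by (simp add: card_cartesian_product mult.commute)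
qed

lemma pigeonhole_large_fibre:
  assumes V: "finite V" and S: "finite S" "S \<noteq> {}" and f: "f ` V \<subseteq> S"
  shows "\<exists>s\<in>S. real (card V) \<le> real (card S) * real (card {v\<in>V. f v = s})"
proof (rule ccontr)
  assume "\<not> ?thesis"
  then have "(\<Sum>s\<in>S. real (card S) * real (card {v\<in>V. f v = s})) < (\<Sum>s\<in>S. real (card V))"
    using S by (intro sum_strict_mono) auto
  moreover have "(\<Sum>s\<in>S. real (card {v\<in>V. f v = s})) = real (card V)"
    using sum.group[OF V S(1) f, of "\<lambda>_. 1::real"] by simp
  then have "(\<Sum>s\<in>S. real (card S) * real (card {v\<in>V. f v = s})) = real (card S) * real (card V)"
    by (metis sum_distrib_left)
  ultimately show False
    by simp
qed

lemma cf_colouring_sparse_large_set: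
  assumes E: "E \<subseteq> all_edges n"
    and cf: "closed_cf_colouring E k c \<or> open_cf_colouring E k c"
  shows "\<exists>A\<subseteq>{1..n}. real n \<le> 2 ^ k * real (card A) \<and> card (E \<inter> edges_within n A) \<le> k * card A"
proof -
  have colours: "\<forall>e\<in>E. c e < k"
    using cf unfolding closed_cf_colouring_def open_cf_colouring_def by auto
  then have "palette E c ` {1..n} \<subseteq> Pow {..<k}"
    unfolding palette_def by auto
  then obtain S where S: "real n \<le> 2 ^ k * real (card {v\<in>{1..n}. palette E c v = S})"
    using pigeonhole_large_fibre[of "{1..n}" "Pow {..<k}" "palette E c"] by (auto simp: card_Pow)
  define A where "A = {v\<in>{1..n}. palette E c v = S}"
  have "\<forall>e\<in>E. e \<subseteq> A \<longrightarrow> (\<exists>w\<in>e. unique_colour_at E c w e)"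
  proof (intro ballI impI)
    fix e assume "e \<in> E" "e \<subseteq> A"
    then have "\<forall>x\<in>e. \<forall>y\<in>e. palette E c x = palette E c y"
      unfolding A_def by auto
    then show "\<exists>w\<in>e. unique_colour_at E c w e"
      using cf closed_cf_colouring_unique_colour_at[OF E _ \<open>e \<in> E\<close>]
        open_cf_colouring_unique_colour_at[OF E _ \<open>e \<in> E\<close>] by blast
  qed
  then have "card {e\<in>E. e \<subseteq> A} \<le> k * card A"
    by (intro card_edges_inside_le[OF _ colours]) (simp add: A_def)
  moreover have "E \<inter> edges_within n A = {e\<in>E. e \<subseteq> A}"
    using E unfolding edges_within_def by auto
  moreover have "A \<subseteq> {1..n}"
    unfolding A_def by auto
  ultimately show ?thesis
    using S unfolding A_def[symmetric] by auto
qed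

lemma rainbow_colouring_is_cf:
  assumes inj: "inj_on c E" and colours: "c ` E \<subseteq> {..<k}"
  shows "open_cf_colouring E k c"
    and "{} \<notin> E \<Longrightarrow> closed_cf_colouring E k c"
proof -
  have single: "card {f \<in> X. c f = c g} = 1" if "g \<in> X" "X \<subseteq> E" for g X
  proof -
    have "{f \<in> X. c f = c g} = {g}"
      using that inj unfolding inj_on_def by blast
    then show ?thesis
      by simp
  qed
  show "open_cf_colouring E k c"
    unfolding open_cf_colouring_def
  proof (intro conjI ballI impI)
    fix e assume "open_nbhd E e \<noteq> {}"
    then obtain g where "g \<in> open_nbhd E e"
      by blast
    moreover have "open_nbhd E e \<subseteq> E"
      unfolding open_nbhd_def closed_nbhd_def by auto
    ultimately show "\<exists>col. card {f \<in> open_nbhd E e. c f = col} = 1"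
      using single by blast
  qed (use colours in auto)
  assume "{} \<notin> E"
  show "closed_cf_colouring E k c"
    unfolding closed_cf_colouring_def
  proof (intro conjI ballI)
    fix e assume "e \<in> E"
    then have "e \<in> closed_nbhd E e"
      using \<open>{} \<notin> E\<close> unfolding closed_nbhd_def by auto
    moreover have "closed_nbhd E e \<subseteq> E"
      unfolding closed_nbhd_def by auto
    ultimately show "\<exists>col. card {f \<in> closed_nbhd E e. c f = col} = 1"
      using single by blast
  qed (use colours in auto)
qed

lemma ex_rainbow_colouring:
  assumes "finite E"
  shows "\<exists>(c :: 'a \<Rightarrow> nat) k. inj_on c E \<and> c ` E \<subseteq> {..<k}"
proof -
  obtain c :: "'a \<Rightarrow> nat" and k where "inj_on c E" "c ` E = {i. i < k}"
    using finite_imp_inj_to_nat_seg[OF assms] by blast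
  then show ?thesis
    unfolding lessThan_def by blast
qed

lemma chi_ccf_attained:
  assumes "E \<subseteq> all_edges n"
  shows "\<exists>c. closed_cf_colouring E (chi_ccf E) c"
proof -
  have "finite E"
    using assms finite_all_edges finite_subset by blast
  moreover have "{} \<notin> E"
    using assms by (auto elim: all_edgesE)
  ultimately have "\<exists>k c. closed_cf_colouring E k c"
    using ex_rainbow_colouring rainbow_colouring_is_cf(2) by meson
  then show ?thesis
    unfolding chi_ccf_def by (rule LeastI_ex)
qed

lemma chi_ocf_attained:
  assumes "E \<subseteq> all_edges n"
  shows "\<exists>c. open_cf_colouring E (chi_ocf E) c"
proof -
  have "finite E"
    using assms finite_all_edges finite_subset by blast
  then have "\<exists>k c. open_cf_colouring E k c"
    using ex_rainbow_colouring rainbow_colouring_is_cf(1) by meson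
  then show ?thesis
    unfolding chi_ocf_def by (rule LeastI_ex)
qed

definition gnp_weight :: "nat \<Rightarrow> real \<Rightarrow> nat set set \<Rightarrow> real" where
  "gnp_weight n p E = p ^ card E * (1 - p) ^ (card (all_edges n) - card E)"

lemma gnp_prob_eq_sum_weight:
  "gnp_prob n p P = (\<Sum>E\<in>Pow (all_edges n). if P E then gnp_weight n p E else 0)"
  unfolding gnp_prob_def gnp_weight_def by simp

lemma gnp_weight_nonneg: "0 \<le> p \<Longrightarrow> p \<le> 1 \<Longrightarrow> 0 \<le> gnp_weight n p E"
  unfolding gnp_weight_def by simp

lemma sum_gnp_weight_mult_prod:
  "(\<Sum>E\<in>Pow (all_edges n). gnp_weight n p E * (\<Prod>e\<in>E. h e))
     = (\<Prod>e\<in>all_edges n. p * h e + (1 - p))"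
proof -
  have "gnp_weight n p E * (\<Prod>e\<in>E. h e) = (\<Prod>e\<in>E. p * h e) * (\<Prod>e\<in>all_edges n - E. 1 - p)"
    if "E \<subseteq> all_edges n" for E
  proof -
    have "finite E"
      using that finite_all_edges finite_subset by blast
    then show ?thesis
      using that finite_all_edges unfolding gnp_weight_def
      by (simp add: card_Diff_subset prod.distrib)
  qed
  then have "(\<Sum>E\<in>Pow (all_edges n). gnp_weight n p E * (\<Prod>e\<in>E. h e))
      = (\<Sum>E\<in>Pow (all_edges n). (\<Prod>e\<in>E. p * h e) * (\<Prod>e\<in>all_edges n - E. 1 - p))"
    by (intro sum.cong) auto
  also have "\<dots> = (\<Prod>e\<in>all_edges n. p * h e + (1 - p))"
    by (rule prod_add[symmetric]) (rule finite_all_edges)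
  finally show ?thesis .
qed

lemma sum_gnp_weight: "(\<Sum>E\<in>Pow (all_edges n). gnp_weight n p E) = 1"
  using sum_gnp_weight_mult_prod[of n p "\<lambda>_. 1"] by simp

lemma gnp_prob_Not: "gnp_prob n p (\<lambda>E. \<not> P E) = 1 - gnp_prob n p P"
proof -
  have "gnp_prob n p P + gnp_prob n p (\<lambda>E. \<not> P E) = (\<Sum>E\<in>Pow (all_edges n). gnp_weight n p E)"
    unfolding gnp_prob_eq_sum_weight sum.distrib[symmetric] by (rule sum.cong) auto
  then show ?thesis
    using sum_gnp_weight by simp
qed

lemma gnp_prob_nonneg: "0 \<le> p \<Longrightarrow> p \<le> 1 \<Longrightarrow> 0 \<le> gnp_prob n p P"
  unfolding gnp_prob_eq_sum_weight by (intro sum_nonneg) (simp add: gnp_weight_nonneg)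

lemma gnp_prob_le_1: "0 \<le> p \<Longrightarrow> p \<le> 1 \<Longrightarrow> gnp_prob n p P \<le> 1"
  using gnp_prob_Not[of n p "\<lambda>E. \<not> P E"] gnp_prob_nonneg[of p n "\<lambda>E. \<not> P E"] by simp

lemma gnp_prob_mono:
  assumes "0 \<le> p" "p \<le> 1" "\<And>E. E \<subseteq> all_edges n \<Longrightarrow> P E \<Longrightarrow> Q E"
  shows "gnp_prob n p P \<le> gnp_prob n p Q"
  unfolding gnp_prob_eq_sum_weight by (intro sum_mono) (use assms gnp_weight_nonneg in auto)

lemma gnp_prob_Bex_le:
  assumes p: "0 \<le> p" "p \<le> 1" and F: "finite F"
  shows "gnp_prob n p (\<lambda>E. \<exists>A\<in>F. Q A E) \<le> (\<Sum>A\<in>F. gnp_prob n p (Q A))"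
proof -
  have "(if \<exists>A\<in>F. Q A E then gnp_weight n p E else 0)
      \<le> (\<Sum>A\<in>F. if Q A E then gnp_weight n p E else 0)" for E
  proof (cases "\<exists>A\<in>F. Q A E")
    case True
    then obtain A where A: "A \<in> F" "Q A E"
      by blast
    have "(if Q A E then gnp_weight n p E else 0) \<le> (\<Sum>A\<in>F. if Q A E then gnp_weight n p E else 0)"
      by (rule member_le_sum) (use A F gnp_weight_nonneg[OF p] in auto)
    then show ?thesis
      using A True by simp
  qed (simp add: sum_nonneg gnp_weight_nonneg[OF p])
  then have "gnp_prob n p (\<lambda>E. \<exists>A\<in>F. Q A E)
      \<le> (\<Sum>E\<in>Pow (all_edges n). \<Sum>A\<in>F. if Q A E then gnp_weight n p E else 0)"
    unfolding gnp_prob_eq_sum_weight by (rule sum_mono)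
  also have "\<dots> = (\<Sum>A\<in>F. gnp_prob n p (Q A))"
    unfolding gnp_prob_eq_sum_weight by (rule sum.swap)
  finally show ?thesis .
qed

lemma gnp_prob_card_Int_le:
  assumes p: "0 \<le> p" "p \<le> 1" and B: "B \<subseteq> all_edges n"
  shows "gnp_prob n p (\<lambda>E. real (card (E \<inter> B)) \<le> t) \<le> 2 powr t * (1 - p / 2) ^ card B"
proof -
  define h where "h e = (if e \<in> B then 1 / 2 else 1 :: real)" for e
  have markov: "(if real (card (E \<inter> B)) \<le> t then gnp_weight n p E else 0)
      \<le> 2 powr t * (gnp_weight n p E * (\<Prod>e\<in>E. h e))" if "E \<subseteq> all_edges n" for E
  proof -
    have "finite E"
      using that finite_all_edges finite_subset by blast
    then have prod_h: "(\<Prod>e\<in>E. h e) = (1 / 2) ^ card (E \<inter> B)"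
      using prod.inter_restrict[of E "\<lambda>_. 1 / 2 :: real" B] unfolding h_def by simp
    show ?thesis
    proof (cases "real (card (E \<inter> B)) \<le> t")
      case True
      then have "2 ^ card (E \<inter> B) \<le> 2 powr t"
        by (metis powr_mono powr_realpow one_le_numeral zero_less_numeral)
      then have "1 \<le> 2 powr t * (1 / 2) ^ card (E \<inter> B)"
        by (simp add: power_one_over field_simps)
      then have "gnp_weight n p E * 1 \<le> gnp_weight n p E * (2 powr t * (1 / 2) ^ card (E \<inter> B))"
        by (intro mult_left_mono) (simp_all add: gnp_weight_nonneg[OF p])
      then show ?thesis
        using True prod_h by (simp add: algebra_simps)
    qed (simp add: prod_h gnp_weight_nonneg[OF p])
  qed
  have prod_eq: "(\<Prod>e\<in>all_edges n. p * h e + (1 - p)) = (1 - p / 2) ^ card B"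
  proof -
    have "(\<Prod>e\<in>all_edges n. p * h e + (1 - p)) = (\<Prod>e\<in>all_edges n. if e \<in> B then 1 - p / 2 else 1)"
      by (rule prod.cong) (auto simp: h_def)
    also have "\<dots> = (1 - p / 2) ^ card B"
      using prod.inter_restrict[OF finite_all_edges[of n], of "\<lambda>_. 1 - p / 2" B] B
      by (simp add: Int_absorb1)
    finally show ?thesis .
  qed
  have "gnp_prob n p (\<lambda>E. real (card (E \<inter> B)) \<le> t)
      \<le> (\<Sum>E\<in>Pow (all_edges n). 2 powr t * (gnp_weight n p E * (\<Prod>e\<in>E. h e)))"
    unfolding gnp_prob_eq_sum_weight by (intro sum_mono markov) auto
  also have "\<dots> = 2 powr t * (1 - p / 2) ^ card B"
    by (simp add: sum_distrib_left[symmetric] sum_gnp_weight_mult_prod prod_eq)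
  finally show ?thesis .
qed

lemma card_edges_within:
  assumes A: "A \<subseteq> {1..n}"
  shows "card (edges_within n A) = card A choose 2"
proof -
  have "edges_within n A = {X. X \<subseteq> A \<and> card X = 2}"
  proof (intro set_eqI iffI)
    fix X assume "X \<in> edges_within n A"
    then show "X \<in> {X. X \<subseteq> A \<and> card X = 2}"
      unfolding edges_within_def all_edges_def by auto
  next
    fix X assume "X \<in> {X. X \<subseteq> A \<and> card X = 2}"
    then obtain u v where "X = {u, v}" "u \<noteq> v" "X \<subseteq> A"
      by (auto simp: card_2_iff)
    then show "X \<in> edges_within n A"
      using A unfolding edges_within_def all_edges_def by blast
  qed
  moreover have "finite A"
    using A finite_subset by blast
  ultimately show ?thesis
    by (simp add: n_subsets)
qed

lemma real_choose_two: "real (a choose 2) = real a * (real a - 1) / 2"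
proof -
  have "even (a * (a - 1))"
    by (cases a) auto
  then have "real (a choose 2) = real (a * (a - 1)) / 2"
    by (simp add: choose_two real_of_nat_div)
  then show ?thesis
    by (cases a) (auto simp: algebra_simps)
qed

lemma sum_power_card_Pow:
  assumes "finite V"
  shows "(\<Sum>X\<in>Pow V. (y::real) ^ card X) = (1 + y) ^ card V"
  using prod_add[OF assms, of "\<lambda>_. y" "\<lambda>_. 1"] by (simp add: add.commute)

lemma gnp_prob_sparse_set_le:
  assumes p: "0 \<le> p" "p \<le> 1" and A: "A \<subseteq> {1..n}" "M \<le> real (card A)"
  shows "gnp_prob n p (\<lambda>E. real (card (E \<inter> edges_within n A)) \<le> t * real (card A))
    \<le> (2 powr t * exp (- p * (M - 1) / 4)) ^ card A"
proof -
  define a where "a = real (card A)"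
  have "gnp_prob n p (\<lambda>E. real (card (E \<inter> edges_within n A)) \<le> t * real (card A))
      \<le> 2 powr (t * a) * (1 - p / 2) ^ card (edges_within n A)"
    unfolding a_def by (rule gnp_prob_card_Int_le) (use p in \<open>auto simp: edges_within_def\<close>)
  also have "(1 - p / 2) ^ card (edges_within n A) \<le> exp (- p / 2) ^ card (edges_within n A)"
    by (rule power_mono) (use p exp_ge_add_one_self[of "- p / 2"] in auto)
  also have "exp (- p / 2) ^ card (edges_within n A) = exp (- p * (a * (a - 1)) / 4)"
    using card_edges_within[OF A(1)]
    by (simp add: exp_of_nat_mult[symmetric] real_choose_two a_def mult.commute)
  also have "exp (- p * (a * (a - 1)) / 4) \<le> exp (- p * (M - 1) / 4) ^ card A"
  proof -
    have "p * (a * (M - 1)) \<le> p * (a * (a - 1))"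
      using p A(2) unfolding a_def by (intro mult_left_mono) auto
    then have "- p * (a * (a - 1)) / 4 \<le> a * (- p * (M - 1) / 4)"
      by (simp add: field_simps)
    then show ?thesis
      unfolding a_def by (simp add: exp_of_nat_mult[symmetric])
  qed
  also have "2 powr (t * a) = (2 powr t) ^ card A"
    unfolding a_def by (simp add: powr_powr[symmetric] powr_realpow)
  finally show ?thesis
    by (simp add: power_mult_distrib mult_left_mono)
qed

lemma gnp_prob_sparse_large_set_le:
  assumes p: "0 \<le> p" "p \<le> 1" and M: "0 < M"
  shows "gnp_prob n p (\<lambda>E. \<exists>A\<in>{A\<in>Pow {1..n}. M \<le> real (card A)}.
            real (card (E \<inter> edges_within n A)) \<le> t * real (card A))
         \<le> exp (real n * 2 powr t * exp (- p * (M - 1) / 4)) - 1"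
proof -
  define y where "y = 2 powr t * exp (- p * (M - 1) / 4)"
  define F where "F = {A\<in>Pow {1..n}. M \<le> real (card A)}"
  have "gnp_prob n p (\<lambda>E. \<exists>A\<in>F. real (card (E \<inter> edges_within n A)) \<le> t * real (card A))
      \<le> (\<Sum>A\<in>F. gnp_prob n p (\<lambda>E. real (card (E \<inter> edges_within n A)) \<le> t * real (card A)))"
    by (rule gnp_prob_Bex_le) (use p in \<open>auto simp: F_def\<close>)
  also have "\<dots> \<le> (\<Sum>A\<in>F. y ^ card A)"
    unfolding y_def F_def by (intro sum_mono gnp_prob_sparse_set_le p) auto
  also have "\<dots> \<le> (\<Sum>A\<in>Pow {1..n} - {{}}. y ^ card A)"
    by (rule sum_mono2) (use M in \<open>auto simp: F_def y_def\<close>)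
  also have "\<dots> = (1 + y) ^ n - 1"
    using sum_power_card_Pow[of "{1..n}" y] sum.remove[of "Pow {1..n}" "{}" "\<lambda>X. y ^ card X"]
    by (simp add: sum_diff1)
  also have "(1 + y) ^ n \<le> exp y ^ n"
    by (rule power_mono) (use exp_ge_add_one_self[of y] in \<open>auto simp: y_def\<close>)
  also have "exp y ^ n = exp (real n * y)"
    by (simp add: exp_of_nat_mult)
  finally show ?thesis
    unfolding y_def F_def by (simp add: mult.assoc)
qed

lemma two_powr_log_diff:
  assumes "0 < x" "0 < L"
  shows "2 powr (log 2 x - 2 * log 2 L) = x / L^2"
proof -
  have "2 powr (2 * log 2 L) = (2 powr log 2 L) ^ 2"
    by (simp add: powr_realpow[symmetric] powr_powr mult.commute)
  then show ?thesis
    using assms by (simp add: powr_diff)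
qed

definition failure_bound :: "nat \<Rightarrow> real" where
  "failure_bound n = exp (exp (1 / 4) * real n ^ 2 * exp (- ((log 2 (real n))^2) / 4)) - 1"

lemma failure_bound_exponent_le:
  assumes L: "1 \<le> L" and p: "0 < p" "p \<le> 1"
  shows "real n * (p * real n / L^2) * exp (- p * (L^2 / p - 1) / 4)
    \<le> exp (1 / 4) * real n ^ 2 * exp (- (L^2) / 4)"
proof -
  have "p * real n \<le> L^2 * real n"
    using p one_le_power[OF L, of 2] by (intro mult_right_mono) auto
  then have "p * real n / L^2 \<le> real n"
    using L by (simp add: divide_le_eq mult.commute)
  moreover have "- p * (L^2 / p - 1) / 4 = p / 4 + - (L^2) / 4"
    using p by (simp add: field_simps)
  then have "exp (- p * (L^2 / p - 1) / 4) = exp (p / 4) * exp (- (L^2) / 4)"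
    by (metis exp_add)
  moreover have "exp (p / 4) \<le> exp (1 / 4)"
    using p by simp
  ultimately have "real n * (p * real n / L^2) * exp (- p * (L^2 / p - 1) / 4)
      \<le> real n * real n * (exp (1 / 4) * exp (- (L^2) / 4))"
    by (intro mult_mono) (use p in auto)
  then show ?thesis
    by (simp add: power2_eq_square mult_ac)
qed

lemma failure_bound_tendsto_0: "failure_bound \<longlonglongrightarrow> 0"
proof -
  have "(\<lambda>n. real n ^ 2 * exp (- ((log 2 (real n))^2) / 4)) \<longlonglongrightarrow> 0"
    unfolding log_def by real_asymp
  then have "failure_bound \<longlonglongrightarrow> exp (exp (1 / 4) * 0) - 1"
    unfolding failure_bound_def mult.assoc by (intro tendsto_intros)
  then show ?thesis
    by simp
qed

lemma gnp_prob_cf_colourable_below_threshold_le: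
  assumes n: "2 \<le> n" and p: "0 < p" "p \<le> 1"
  defines "t \<equiv> log 2 (p * real n) - 2 * log 2 (log 2 (real n))"
  shows "gnp_prob n p (\<lambda>E. \<exists>k c. real k < t \<and> (closed_cf_colouring E k c \<or> open_cf_colouring E k c))
    \<le> failure_bound n"
proof -
  define L where "L = log 2 (real n)"
  define M where "M = L^2 / p"
  have L: "1 \<le> L"
    unfolding L_def using n by simp
  have two_powr_t: "2 powr t = p * real n / L^2"
    unfolding t_def L_def using two_powr_log_diff n p L L_def by simp
  have "gnp_prob n p (\<lambda>E. \<exists>k c. real k < t \<and> (closed_cf_colouring E k c \<or> open_cf_colouring E k c))
      \<le> gnp_prob n p (\<lambda>E. \<exists>A\<in>{A\<in>Pow {1..n}. M \<le> real (card A)}.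
            real (card (E \<inter> edges_within n A)) \<le> t * real (card A))"
  proof (rule gnp_prob_mono)
    fix E assume E: "E \<subseteq> all_edges n"
      and "\<exists>k c. real k < t \<and> (closed_cf_colouring E k c \<or> open_cf_colouring E k c)"
    then obtain k c where k: "real k < t"
      and cf: "closed_cf_colouring E k c \<or> open_cf_colouring E k c"
      by blast
    obtain A where A: "A \<subseteq> {1..n}" "real n \<le> 2 ^ k * real (card A)"
      "card (E \<inter> edges_within n A) \<le> k * card A"
      using cf_colouring_sparse_large_set[OF E cf] by blast
    have "real (card (E \<inter> edges_within n A)) \<le> real k * real (card A)"
      using A(3) by (simp flip: of_nat_mult)
    also have "\<dots> \<le> t * real (card A)"
      using k by (intro mult_right_mono) auto
    finally have sparse: "real (card (E \<inter> edges_within n A)) \<le> t * real (card A)" .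
    have "(2::real) ^ k \<le> 2 powr t"
      using k powr_mono[of "real k" t 2] by (simp add: powr_realpow)
    then have "real n \<le> p * real n / L^2 * real (card A)"
      using A(2) two_powr_t by (metis mult_right_mono of_nat_0_le_iff order_trans)
    then have "real n * L^2 \<le> real n * (p * real (card A))"
      using L by (simp add: field_simps)
    then have "M \<le> real (card A)"
      unfolding M_def using n p by (simp add: divide_le_eq mult.commute)
    then show "\<exists>A\<in>{A\<in>Pow {1..n}. M \<le> real (card A)}.
        real (card (E \<inter> edges_within n A)) \<le> t * real (card A)"
      using A(1) sparse by blast
  qed (use p in auto)
  also have "\<dots> \<le> exp (real n * 2 powr t * exp (- p * (M - 1) / 4)) - 1"
    by (rule gnp_prob_sparse_large_set_le) (use p L in \<open>auto simp: M_def\<close>)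
  also have "\<dots> \<le> failure_bound n"
    using failure_bound_exponent_le[OF L p, of n]
    unfolding failure_bound_def two_powr_t M_def L_def by simp
  finally show ?thesis .
qed

lemma tendsto_gnp_prob_cf_threshold:
  fixes chi :: "nat set set \<Rightarrow> nat"
  assumes p: "\<And>n. 0 \<le> p n \<and> p n \<le> 1"
    and lim: "filterlim (\<lambda>n. p n * real n / (log 2 (real n))^2) at_top sequentially"
    and chi: "\<And>n E. E \<subseteq> all_edges n \<Longrightarrow>
      \<exists>c. closed_cf_colouring E (chi E) c \<or> open_cf_colouring E (chi E) c"
  shows "(\<lambda>n. gnp_prob n (p n) (\<lambda>E. real (chi E) \<ge>
            log 2 (p n * real n) - 2 * log 2 (log 2 (real n)))) \<longlonglongrightarrow> 1"
proof -
  define t where "t n = log 2 (p n * real n) - 2 * log 2 (log 2 (real n))" for n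
  have "eventually (\<lambda>n. 0 < p n * real n / (log 2 (real n))^2) sequentially"
    using lim by (simp add: filterlim_at_top_dense)
  then have "eventually (\<lambda>n. 1 - failure_bound n \<le> gnp_prob n (p n) (\<lambda>E. t n \<le> real (chi E)))
      sequentially"
    using eventually_ge_at_top[of 2]
  proof eventually_elim
    case (elim n)
    then have "0 < p n"
      using p[of n] by (auto simp: zero_less_divide_iff zero_less_mult_iff)
    have "gnp_prob n (p n) (\<lambda>E. \<not> t n \<le> real (chi E))
        \<le> gnp_prob n (p n) (\<lambda>E. \<exists>k c. real k < t n \<and>
              (closed_cf_colouring E k c \<or> open_cf_colouring E k c))"
      by (rule gnp_prob_mono) (use p chi in \<open>auto simp: not_le\<close>)
    also have "\<dots> \<le> failure_bound n"
      unfolding t_def using elim(2) \<open>0 < p n\<close> p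
      by (intro gnp_prob_cf_colourable_below_threshold_le) auto
    finally show ?case
      using gnp_prob_Not by simp
  qed
  moreover have "eventually (\<lambda>n. gnp_prob n (p n) (\<lambda>E. t n \<le> real (chi E)) \<le> 1) sequentially"
    using p by (intro always_eventually allI gnp_prob_le_1) auto
  moreover have "(\<lambda>n. 1 - failure_bound n) \<longlonglongrightarrow> 1"
    using tendsto_diff[OF tendsto_const failure_bound_tendsto_0, of 1] by simp
  ultimately have "(\<lambda>n. gnp_prob n (p n) (\<lambda>E. t n \<le> real (chi E))) \<longlonglongrightarrow> 1"
    using tendsto_const by (rule tendsto_sandwich)
  then show ?thesis
    unfolding t_def .
qed

theorem mainTheorem12:
  fixes p :: "nat \<Rightarrow> real"
  assumes "\<And>n. 0 \<le> p n \<and> p n \<le> 1"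
    and "filterlim (\<lambda>n. p n * real n / (log 2 (real n))^2) at_top sequentially"
  shows "(\<lambda>n. gnp_prob n (p n) (\<lambda>E. real (chi_ccf E) \<ge>
            log 2 (p n * real n) - 2 * log 2 (log 2 (real n)))) \<longlonglongrightarrow> 1
       \<and> (\<lambda>n. gnp_prob n (p n) (\<lambda>E. real (chi_ocf E) \<ge>
            log 2 (p n * real n) - 2 * log 2 (log 2 (real n)))) \<longlonglongrightarrow> 1"
  using tendsto_gnp_prob_cf_threshold[OF assms, of chi_ccf]
    tendsto_gnp_prob_cf_threshold[OF assms, of chi_ocf]
    chi_ccf_attained chi_ocf_attained
  by blast

end
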